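(* Let $\mathbf{x}=(x_s)\in\mathbb{C}^{\mathbb{Z}^2}$ satisfy $Q^C(\mathbf{x})=0$ for every unit square $C$ in $\mathbb{Z}^2$. Then for every $v\in\mathbb{Z}^2$, $$\Big(\prod_{C\ni v}Q^C_v(\mathbf{x})\Big)^2=\Big(\prod_{S\ni v}(x_v+x_{v_1})\Big)^2,$$ where the first product is over the $4$ unit squares containing $v$ and the second over the $4$ unit edges $S$ containing $v$, $v_1$ denoting the other endpoint of $S$. Moreover, $$\big(Q_v^{C_v(1,1)}(\mathbf{x})Q_v^{C_v(-1,-1)}(\mathbf{x})\big)^2=\big(Q_v^{C_v(1,-1)}(\mathbf{x})Q_v^{C_v(-1,1)}(\mathbf{x})\big)^2=\prod_{S\ni v}(x_v+x_{v_1}).$$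
   Context: For a unit square $C$ in $\mathbb{Z}^2$ with values $z_{00},z_{10},z_{01},z_{11}$ at its vertices (via an identification $C\cong\{0,1\}^2$), $Q^C(\mathbf{x})=z_{00}^2+z_{10}^2+z_{01}^2+z_{11}^2-2(z_{00}z_{10}+z_{10}z_{11}+z_{11}z_{01}+z_{01}z_{00})-6(z_{00}z_{11}+z_{10}z_{01})$. For a vertex $v$ of $C$, with the labeling chosen so that $z_{00}=x_v$, $Q^C_v(\mathbf{x})=\frac{1}{2\sqrt2}(z_{11}-z_{10}-z_{01}-3z_{00})$. For $v\in\mathbb{Z}^2$ and $i_1,i_2\in\{-1,1\}$, $C_v(i_1,i_2)$ is the unit square containing $v$ and $v+(i_1,i_2)$. *)

theory Defs
  imports Complex_Main
begin

type_synonym vtx = "int \<times> int"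

definition qsq :: "complex \<Rightarrow> complex \<Rightarrow> complex \<Rightarrow> complex \<Rightarrow> complex" where
  "qsq z00 z10 z01 z11 =
     z00^2 + z10^2 + z01^2 + z11^2
     - 2 * (z00 * z10 + z10 * z11 + z11 * z01 + z01 * z00)
     - 6 * (z00 * z11 + z10 * z01)"

definition QC :: "(vtx \<Rightarrow> complex) \<Rightarrow> vtx \<Rightarrow> complex" where
  "QC x p = (case p of (a, b) \<Rightarrow>
     qsq (x (a, b)) (x (a + 1, b)) (x (a, b + 1)) (x (a + 1, b + 1)))"

text \<open>Q^C_v(x) for C = C_v(i1,i2), the unit square with vertices v, v+(i1,0), v+(0,i2),
  v+(i1,i2); the labeling has z00 = x_v, z11 = x_{v+(i1,i2)} (the opposite vertex)
  and z10, z01 the two neighbours of v in C.\<close>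
definition QCv :: "(vtx \<Rightarrow> complex) \<Rightarrow> vtx \<Rightarrow> int \<Rightarrow> int \<Rightarrow> complex" where
  "QCv x v i1 i2 = (case v of (a, b) \<Rightarrow>
     (x (a + i1, b + i2) - x (a + i1, b) - x (a, b + i2) - 3 * x (a, b))
       / (2 * complex_of_real (sqrt 2)))"

end

theory Submission
  imports Defs
begin

text \<open>Completing the square at the corner z00 gives
  (z11 - z10 - z01 - 3 z00)^2 = 8 (z00 + z10)(z00 + z01) + Q^C, and Q^C is invariant under
  the reflections of the square, so on the quadric Q^C = 0 this identity holds at every corner.
  Since (2 sqrt 2)^2 = 8, it says (Q^C_v)^2 = (x_v + x_{v'}) (x_v + x_{v''}) for the two edges
  of C at v; multiplying over two opposite squares at v, or over all four, gives the claims.\<close>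

lemma qsq_corner_square:
  "(z11 - z10 - z01 - 3 * z00)^2 = 8 * (z00 + z10) * (z00 + z01) + qsq z00 z10 z01 z11"
  unfolding qsq_def by (simp add: power2_eq_square algebra_simps)

lemma qsq_reflect_horizontal: "qsq z00 z10 z01 z11 = qsq z10 z00 z11 z01"
  and qsq_reflect_vertical: "qsq z00 z10 z01 z11 = qsq z01 z11 z00 z10"
  unfolding qsq_def by (simp_all add: algebra_simps)

lemma QCv_square_eq:
  "(QCv x (a, b) i1 i2)^2 = (x (a + i1, b + i2) - x (a + i1, b) - x (a, b + i2) - 3 * x (a, b))^2 / 8"
proof -
  have "(2 * complex_of_real (sqrt 2))^2 = 8"
    by (simp add: power_mult_distrib flip: of_real_power)
  then show ?thesis
    by (simp add: QCv_def power_divide)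
qed

lemma QCv_squared:
  assumes "\<forall>p. QC x p = 0" and "i1 \<in> {1, -1}" and "i2 \<in> {1, -1}"
  shows "(QCv x (a, b) i1 i2)^2 = (x (a, b) + x (a + i1, b)) * (x (a, b) + x (a, b + i2))"
proof -
  have "qsq (x (a, b)) (x (a + i1, b)) (x (a, b + i2)) (x (a + i1, b + i2)) = 0"
  proof -
    have "QC x (min a (a + i1), min b (b + i2)) = 0" using assms(1) by blast
    then show ?thesis
      using assms(2,3) unfolding QC_def
      by (auto simp: qsq_reflect_horizontal[of "x (a - 1, _)"] qsq_reflect_vertical[of "x (_, b - 1)"]
          qsq_reflect_vertical[of "x (a - 1, b - 1)"])
  qed
  then show ?thesis
    unfolding QCv_square_eq qsq_corner_square by (simp add: algebra_simps)
qed

theorem proposition5p4: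
  fixes x :: "int \<times> int \<Rightarrow> complex"
  assumes "\<forall>p. QC x p = 0"
  shows "\<forall>v :: int \<times> int.
     (\<Prod>(i1, i2)\<in>{(1, 1), (1, -1), (-1, 1), (-1, -1)}. QCv x v i1 i2) ^ 2
       = (\<Prod>d\<in>{(1, 0), (-1, 0), (0, 1), (0, -1)}. x v + x (fst v + fst d, snd v + snd d)) ^ 2
     \<and> (QCv x v 1 1 * QCv x v (-1) (-1)) ^ 2
       = (\<Prod>d\<in>{(1, 0), (-1, 0), (0, 1), (0, -1)}. x v + x (fst v + fst d, snd v + snd d))
     \<and> (QCv x v 1 (-1) * QCv x v (-1) 1) ^ 2
       = (\<Prod>d\<in>{(1, 0), (-1, 0), (0, 1), (0, -1)}. x v + x (fst v + fst d, snd v + snd d))"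
proof
  fix v :: "int \<times> int"
  obtain a b where v: "v = (a, b)" by (cases v)
  have squares:
    "(QCv x v 1 1)^2 = (x (a, b) + x (a + 1, b)) * (x (a, b) + x (a, b + 1))"
    "(QCv x v (-1) (-1))^2 = (x (a, b) + x (a - 1, b)) * (x (a, b) + x (a, b - 1))"
    "(QCv x v 1 (-1))^2 = (x (a, b) + x (a + 1, b)) * (x (a, b) + x (a, b - 1))"
    "(QCv x v (-1) 1)^2 = (x (a, b) + x (a - 1, b)) * (x (a, b) + x (a, b + 1))"
    using QCv_squared[OF assms, of _ _ a b] unfolding v by simp_all
  have edges: "(\<Prod>d\<in>{(1, 0), (-1, 0), (0, 1), (0, -1)}. x v + x (fst v + fst d, snd v + snd d))
     = (x (a, b) + x (a + 1, b)) * (x (a, b) + x (a - 1, b)) * (x (a, b) + x (a, b + 1)) * (x (a, b) + x (a, b - 1))"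
    unfolding v by (simp add: algebra_simps)
  have squares_at_v: "(\<Prod>(i1, i2)\<in>{(1::int, 1::int), (1, -1), (-1, 1), (-1, -1)}. QCv x v i1 i2)
     = QCv x v 1 1 * QCv x v 1 (-1) * QCv x v (-1) 1 * QCv x v (-1) (-1)"
    by (simp add: algebra_simps)
  show "(\<Prod>(i1, i2)\<in>{(1, 1), (1, -1), (-1, 1), (-1, -1)}. QCv x v i1 i2) ^ 2
       = (\<Prod>d\<in>{(1, 0), (-1, 0), (0, 1), (0, -1)}. x v + x (fst v + fst d, snd v + snd d)) ^ 2
     \<and> (QCv x v 1 1 * QCv x v (-1) (-1)) ^ 2
       = (\<Prod>d\<in>{(1, 0), (-1, 0), (0, 1), (0, -1)}. x v + x (fst v + fst d, snd v + snd d))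
     \<and> (QCv x v 1 (-1) * QCv x v (-1) 1) ^ 2
       = (\<Prod>d\<in>{(1, 0), (-1, 0), (0, 1), (0, -1)}. x v + x (fst v + fst d, snd v + snd d))"
    unfolding squares_at_v edges power_mult_distrib squares
    by (simp add: algebra_simps power2_eq_square)
qed

end
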